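(* Let $\mathbf X=\{X_n\}_{n\ge1}$ and $\mathbf Y=\{Y_n\}_{n\ge1}$ be general sources. Suppose that $$\text{for every }\gamma\in\mathbb R:\qquad \lim_{n\to\infty}\mu\big(\{\delta\in[0,1): c_n^x(\delta)-c_n^y(\delta)<\gamma\}\big)=0$$ (equivalently, $\mu\text{-}\liminf_{n\to\infty}\{c_n^x(\delta)-c_n^y(\delta)\}=\infty$). Then $\mathbf X$ is an approximating source for $\mathbf Y$.
   Context: Logarithms are natural. A general source $\mathbf X=\{X_n\}_{n\ge1}$ is a sequence of random variables, $X_n$ taking values in a countable set $\mathcal X_n$, with no consistency requirements between different $n$. Similarly $Y_n$ takes values in a countable set $\mathcal Y_n$. For a random variable $Z$ on a countable set $\mathcal Z$ with pmf $P_Z$, list the elements of positive probability as $z_1,z_2,\dots$ (a finite or countably infinite list) with $P_Z(z_1)\ge P_Z(z_2)\ge\cdots$ (ties broken arbitrarily). Set $\delta_0=0$ and $\delta_k=\sum_{i\le k}P_Z(z_i)$. For $\delta\in[0,1)$ define $c^z(\delta)=\log\frac{1}{P_Z(z_k)}$, where $k$ is the unique index with $\delta\in[\delta_{k-1},\delta_k)$. Here $c_n^x$ and $c_n^y$ denote this function built from $P_{X_n}$ and from $P_{Y_n}$ respectively. The variational distance is $d(P,Q)=\sum_a|P(a)-Q(a)|$. $\mathbf X$ is an approximating source for $\mathbf Y$ if there exist deterministic maps $\phi_n:\mathcal X_n\to\mathcal Y_n$ with $\lim_{n\to\infty}d(P_{Y_n},P_{\phi_n(X_n)})=0$. $\mu$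 denotes Lebesgue measure. *)

theory Defs
  imports "HOL-Probability.Probability"
begin

text \<open>A source is modelled as a sequence of pmfs X :: nat => 'a pmf on a countable type.
  Indices are 0-based: z 0, z 1, ... correspond to the paper's z_1, z_2, ...\<close>

definition desc_enum :: "'a pmf \<Rightarrow> (nat \<Rightarrow> 'a) \<Rightarrow> nat set \<Rightarrow> bool" where
  "desc_enum p z I \<longleftrightarrow>
     (\<forall>i j. j \<in> I \<longrightarrow> i \<le> j \<longrightarrow> i \<in> I) \<and>
     bij_betw z I (set_pmf p) \<and>
     (\<forall>i\<in>I. \<forall>j\<in>I. i \<le> j \<longrightarrow> pmf p (z j) \<le> pmf p (z i))"

text \<open>The function c^z(delta) = log (1 / P(z_k)) where delta lies in [delta_{k-1}, delta_k),
  delta_k being the cumulative mass of the first k elements of the enumeration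
  (ties broken arbitrarily: any nonincreasing enumeration may be chosen).\<close>

definition cfun :: "'a pmf \<Rightarrow> real \<Rightarrow> real" where
  "cfun p \<delta> = (SOME v. \<exists>z I k. desc_enum p z I \<and> k \<in> I \<and>
      (\<Sum>i<k. pmf p (z i)) \<le> \<delta> \<and> \<delta> < (\<Sum>i<Suc k. pmf p (z i)) \<and>
      v = ln (1 / pmf p (z k)))"

definition vdist :: "'a pmf \<Rightarrow> 'a pmf \<Rightarrow> real" where
  "vdist p q = (\<Sum>\<^sub>\<infinity>a. \<bar>pmf p a - pmf q a\<bar>)"

definition approximating_source :: "(nat \<Rightarrow> 'a pmf) \<Rightarrow> (nat \<Rightarrow> 'b pmf) \<Rightarrow> bool" where
  "approximating_source X Y \<longleftrightarrow>
     (\<exists>\<phi> :: nat \<Rightarrow> 'a \<Rightarrow> 'b. (\<lambda>n. vdist (Y n) (map_pmf (\<phi> n) (X n))) \<longlonglongrightarrow> 0)"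

end

theory Submission
  imports Defs
begin

(*
  Let U be the uniform (Lebesgue) probability measure on [0,1).  A pmf p,
  enumerated as z_0, z_1, ... in nonincreasing order of probability with cumulative masses
  cum k = p(z_0) + ... + p(z_{k-1}), is realised on U by the quantile map that sends every point
  of [cum k, cum (k+1)) to z_k; on this interval c^p equals log (1 / p(z_k)).  Given
  p = P_{X_n} and q = P_{Y_n}, send z_i to the q-symbol whose interval contains the left end
  cum i of the p-interval of z_i.  This deterministic map phi satisfies
      d(q, phi(p)) <= 2 * (mu {delta. c^p(delta) - c^q(delta) < gamma} + exp (-gamma))
  for every gamma: by the coupling inequality d(q, phi(p)) is at most twice the measure of the
  points where the two quantile maps disagree, and every such point outside the "bad" set lies
  in a short collar of length exp (-gamma) * q(w_j) right after the end of some q-interval j.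
  The file first constructs the nonincreasing enumerations and shows that cfun is determined by
  any of them, then develops the quantile map, the coupling inequality and the collar estimate,
  and finally lets n -> oo and gamma -> oo.
*)


section \<open>Nonincreasing enumerations of a pmf\<close>

lemma finite_pmf_ge:
  fixes p :: "'a pmf"
  assumes c: "c > 0"
  shows "finite {x. c \<le> pmf p x}"
proof (rule ccontr)
  assume inf: "infinite {x. c \<le> pmf p x}"
  obtain n :: nat where n: "n > 1 / c" using reals_Archimedean2 by blast
  obtain F where F: "F \<subseteq> {x. c \<le> pmf p x}" "finite F" "card F = n"
    using infinite_arbitrarily_large[OF inf] by blast
  have "real n * c = (\<Sum>x\<in>F. c)" using F by simp
  also have "\<dots> \<le> (\<Sum>x\<in>F. pmf p x)" using F by (intro sum_mono) auto
  also have "\<dots> = measure (measure_pmf p) F" using F by (simp add: measure_measure_pmf_finite)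
  also have "\<dots> \<le> 1" by simp
  finally show False using n c by (simp add: field_simps)
qed

text \<open>A strict total order in which every element has finitely many predecessors is enumerated
  order-preservingly by an initial segment of the naturals (the rank of an element being the
  number of its predecessors).\<close>

lemma enumerate_by_rank:
  fixes lt :: "'a \<Rightarrow> 'a \<Rightarrow> bool" and S :: "'a set"
  assumes trans: "\<And>x y u. x \<in> S \<Longrightarrow> y \<in> S \<Longrightarrow> u \<in> S \<Longrightarrow> lt x y \<Longrightarrow> lt y u \<Longrightarrow> lt x u"
    and irrefl: "\<And>x. \<not> lt x x"
    and total: "\<And>x y. x \<in> S \<Longrightarrow> y \<in> S \<Longrightarrow> x \<noteq> y \<Longrightarrow> lt x y \<or> lt y x"
    and finite_below: "\<And>y. y \<in> S \<Longrightarrow> finite {x\<in>S. lt x y}"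
  shows "\<exists>(z :: nat \<Rightarrow> 'a) I. (\<forall>i j. j \<in> I \<longrightarrow> i \<le> j \<longrightarrow> i \<in> I) \<and> bij_betw z I S \<and>
           (\<forall>i\<in>I. \<forall>j\<in>I. i < j \<longrightarrow> lt (z i) (z j))"
proof -
  define below where "below y = {x\<in>S. lt x y}" for y
  define rk where "rk y = card (below y)" for y
  have rk_less: "rk x < rk y" if "x \<in> S" "y \<in> S" "lt x y" for x y
  proof -
    have "below x \<subseteq> below y"
    proof
      fix u assume "u \<in> below x"
      thus "u \<in> below y" using trans[of u x y] that unfolding below_def by auto
    qed
    moreover have "x \<in> below y" "x \<notin> below x" using that irrefl unfolding below_def by auto
    ultimately have "below x \<subset> below y" by blast
    thus ?thesis unfolding rk_def using finite_below[OF \<open>y \<in> S\<close>]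
      by (intro psubset_card_mono) (auto simp: below_def)
  qed
  have inj: "inj_on rk S"
  proof (rule inj_onI)
    fix x y assume "x \<in> S" "y \<in> S" "rk x = rk y"
    thus "x = y" using rk_less total by (metis less_irrefl)
  qed
  define I where "I = rk ` S"
  define z where "z = inv_into S rk"
  have bij: "bij_betw z I S"
    unfolding z_def I_def using inj by (intro bij_betw_inv_into bij_betw_imageI) auto
  have rk_z: "rk (z i) = i" "z i \<in> S" if "i \<in> I" for i
    using that unfolding z_def I_def by (auto simp: f_inv_into_f inv_into_into)
  have down: "i \<in> I" if "j \<in> I" "i \<le> j" for i j
  proof -
    obtain y where y: "y \<in> S" "j = rk y" using \<open>j \<in> I\<close> unfolding I_def by auto
    have "rk ` below y \<subseteq> {..<j}" using rk_less y unfolding below_def by auto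
    moreover have "card (rk ` below y) = j"
      using y inj unfolding rk_def below_def by (subst card_image) (auto intro: inj_on_subset)
    ultimately have "rk ` below y = {..<j}" by (intro card_subset_eq) auto
    moreover have "rk ` below y \<subseteq> I" unfolding I_def below_def by auto
    ultimately have "{..<j} \<subseteq> I" by simp
    thus ?thesis using that le_neq_implies_less by blast
  qed
  have order: "lt (z i) (z j)" if "i \<in> I" "j \<in> I" "i < j" for i j
  proof -
    have ranks: "rk (z i) = i" "rk (z j) = j" and in_S: "z i \<in> S" "z j \<in> S"
      using rk_z that by auto
    hence "z i \<noteq> z j" using \<open>i < j\<close> by auto
    moreover have "\<not> lt (z j) (z i)" using rk_less[OF in_S(2) in_S(1)] ranks \<open>i < j\<close> by auto
    ultimately show ?thesis using total[OF in_S] by blast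
  qed
  show ?thesis using down bij order by blast
qed

text \<open>Every pmf on a countable type has a nonincreasing enumeration (ties broken by a fixed
  injection into the naturals), so the definition of cfun is never vacuous.\<close>

lemma exists_desc_enum:
  fixes p :: "'a::countable pmf"
  shows "\<exists>z I. desc_enum p z I"
proof -
  define lt where
    "lt x y \<longleftrightarrow> pmf p y < pmf p x \<or> (pmf p x = pmf p y \<and> to_nat x < to_nat y)" for x y
  have finite_below: "finite {x\<in>set_pmf p. lt x y}" if "y \<in> set_pmf p" for y
  proof (rule finite_subset)
    show "{x\<in>set_pmf p. lt x y} \<subseteq> {x. pmf p y \<le> pmf p x}" unfolding lt_def by auto
    show "finite {x. pmf p y \<le> pmf p x}"
      using that by (intro finite_pmf_ge) (simp add: pmf_positive)
  qed
  have total: "lt x y \<or> lt y x" if "x \<noteq> y" for x y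
    using that inj_to_nat[where 'a='a] unfolding lt_def inj_def
    by (metis linorder_neqE_linordered_idom linorder_neqE_nat)
  have trans: "lt x u" if "lt x y" "lt y u" for x y u
    using that unfolding lt_def by auto
  have irrefl: "\<not> lt x x" for x
    unfolding lt_def by auto
  have "\<exists>(z :: nat \<Rightarrow> 'a) I. (\<forall>i j. j \<in> I \<longrightarrow> i \<le> j \<longrightarrow> i \<in> I) \<and>
      bij_betw z I (set_pmf p) \<and> (\<forall>i\<in>I. \<forall>j\<in>I. i < j \<longrightarrow> lt (z i) (z j))"
  proof (rule enumerate_by_rank)
    fix x y u :: 'a assume "lt x y" "lt y u"
    thus "lt x u" by (rule trans)
  next
    fix x y :: 'a assume "x \<noteq> y"
    thus "lt x y \<or> lt y x" by (rule total)
  qed (use irrefl finite_below in auto)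
  then obtain z :: "nat \<Rightarrow> 'a" and I where down: "\<forall>i j. j \<in> I \<longrightarrow> i \<le> j \<longrightarrow> i \<in> I"
    and bij: "bij_betw z I (set_pmf p)" and order: "\<forall>i\<in>I. \<forall>j\<in>I. i < j \<longrightarrow> lt (z i) (z j)"
    by blast
  have "pmf p (z j) \<le> pmf p (z i)" if "i \<in> I" "j \<in> I" "i \<le> j" for i j
  proof (cases "i = j")
    case False
    hence "lt (z i) (z j)" using order that by simp
    thus ?thesis unfolding lt_def by auto
  qed simp
  thus ?thesis using down bij unfolding desc_enum_def by blast
qed

text \<open>The probability attached to a point delta does not depend on the chosen enumeration:
  if delta lies in the k-th interval of one enumeration and in the k'-th of another, then
  p(z_k) <= p(z'_k') (and by symmetry equality holds).\<close>

lemma desc_enum_value_le: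
  assumes D: "desc_enum p z I" and D': "desc_enum p z' I'"
    and k: "k \<in> I" and k': "k' \<in> I'"
    and upper: "\<delta> < (\<Sum>i<Suc k. pmf p (z i))" and lower: "(\<Sum>i<k'. pmf p (z' i)) \<le> \<delta>"
  shows "pmf p (z k) \<le> pmf p (z' k')"
proof (rule ccontr)
  assume "\<not> ?thesis"
  hence lt: "pmf p (z' k') < pmf p (z k)" by simp
  have downI: "{..<Suc k} \<subseteq> I" and downI': "{..<k'} \<subseteq> I'"
    using D D' k k' unfolding desc_enum_def by (auto simp: less_Suc_eq_le)
  have bI: "bij_betw z I (set_pmf p)" and bI': "bij_betw z' I' (set_pmf p)"
    using D D' unfolding desc_enum_def by auto
  have sub: "z ` {..<Suc k} \<subseteq> z' ` {..<k'}"
  proof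
    fix x assume "x \<in> z ` {..<Suc k}"
    then obtain i where i: "i \<le> k" "x = z i" by (auto simp: less_Suc_eq_le)
    have "pmf p (z k) \<le> pmf p x" using D downI k i unfolding desc_enum_def by auto
    moreover obtain j where j: "j \<in> I'" "x = z' j"
      using bI bI' downI i by (force simp: bij_betw_def)
    ultimately have "j < k'"
      using D' k' lt unfolding desc_enum_def by (metis linorder_not_le order.strict_trans1)
    thus "x \<in> z' ` {..<k'}" using j by auto
  qed
  have "(\<Sum>i<Suc k. pmf p (z i)) = (\<Sum>x\<in>z ` {..<Suc k}. pmf p x)"
    using bI downI by (subst sum.reindex) (auto simp: bij_betw_def intro: inj_on_subset)
  also have "\<dots> \<le> (\<Sum>x\<in>z' ` {..<k'}. pmf p x)"
    using sub by (intro sum_mono2) auto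
  also have "\<dots> = (\<Sum>i<k'. pmf p (z' i))"
    using bI' downI' by (subst sum.reindex) (auto simp: bij_betw_def intro: inj_on_subset)
  finally show False using upper lower by simp
qed


section \<open>The uniform probability space on [0,1)\<close>

definition U :: "real measure" where "U = restrict_space lborel {0..<1}"

lemma prob_space_U: "prob_space U"
  unfolding U_def by (rule prob_space_restrict_space) auto

lemma space_U: "space U = {0..<1}"
  unfolding U_def by (simp add: space_restrict_space)

lemma sets_U: "A \<subseteq> {0..<1} \<Longrightarrow> A \<in> sets borel \<Longrightarrow> A \<in> sets U"
  unfolding U_def by (auto simp: sets_restrict_space_iff)

lemma emeasure_U: "A \<subseteq> {0..<1} \<Longrightarrow> emeasure U A = emeasure lborel A"
  unfolding U_def by (rule emeasure_restrict_space) auto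

lemma measure_U: "A \<subseteq> {0..<1} \<Longrightarrow> measure U A = measure lborel A"
  unfolding U_def by (rule measure_restrict_space) auto


section \<open>The quantile map of a nonincreasing enumeration\<close>

locale desc_enumeration =
  fixes p :: "'a::countable pmf" and z :: "nat \<Rightarrow> 'a" and I :: "nat set"
  assumes desc: "desc_enum p z I"
begin

definition cum :: "nat \<Rightarrow> real" where "cum k = (\<Sum>i<k. pmf p (z i))"

lemma down: "j \<in> I \<Longrightarrow> i \<le> j \<Longrightarrow> i \<in> I"
  using desc unfolding desc_enum_def by blast

lemma inj: "inj_on z I"
  using desc unfolding desc_enum_def bij_betw_def by blast

lemma image: "z ` I = set_pmf p"
  using desc unfolding desc_enum_def bij_betw_def by blast

lemma mono: "i \<in> I \<Longrightarrow> j \<in> I \<Longrightarrow> i \<le> j \<Longrightarrow> pmf p (z j) \<le> pmf p (z i)"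
  using desc unfolding desc_enum_def by blast

lemma pos: "i \<in> I \<Longrightarrow> pmf p (z i) > 0"
  using image by (intro pmf_positive) blast

lemma cum_Suc: "cum (Suc k) = cum k + pmf p (z k)"
  by (simp add: cum_def)

lemma cum_mono: "m \<le> n \<Longrightarrow> cum m \<le> cum n"
  unfolding cum_def by (intro sum_mono2) auto

lemma cum_nonneg: "cum k \<ge> 0"
  unfolding cum_def by (intro sum_nonneg) auto

lemma cum_eq_measure:
  assumes "finite J" "J \<subseteq> I"
  shows "(\<Sum>i\<in>J. pmf p (z i)) = measure (measure_pmf p) (z ` J)"
proof -
  have "inj_on z J" using inj assms(2) by (rule inj_on_subset)
  thus ?thesis using assms(1) by (simp add: measure_measure_pmf_finite sum.reindex)
qed

lemma cum_le_1:
  assumes "k \<in> I"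
  shows "cum (Suc k) \<le> 1"
proof -
  have "{..<Suc k} \<subseteq> I" using down assms by (auto simp: less_Suc_eq_le)
  thus ?thesis unfolding cum_def by (subst cum_eq_measure) auto
qed

text \<open>The intervals [cum k, cum (k+1)), k in I, cover [0,1): the masses of the first m atoms
  increase to 1.\<close>

lemma cover:
  assumes "0 \<le> \<delta>" "\<delta> < 1"
  shows "\<exists>k\<in>I. \<delta> < cum (Suc k)"
proof -
  define A where "A m = z ` (I \<inter> {..<m})" for m
  have "(\<lambda>m. measure (measure_pmf p) (A m)) \<longlonglongrightarrow> measure (measure_pmf p) (\<Union>m. A m)"
    by (rule measure_pmf.finite_Lim_measure_incseq) (auto simp: incseq_def A_def)
  moreover have "(\<Union>m. A m) = set_pmf p" unfolding A_def using image by auto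
  moreover have "measure (measure_pmf p) (set_pmf p) = 1"
    by (metis inf_top_left measure_Int_set_pmf measure_pmf_UNIV)
  ultimately have "(\<lambda>m. measure (measure_pmf p) (A m)) \<longlonglongrightarrow> 1" by metis
  from order_tendstoD(1)[OF this assms(2)] obtain m
    where m: "\<delta> < measure (measure_pmf p) (A m)"
    by (auto simp: eventually_sequentially)
  have nonempty: "I \<inter> {..<m} \<noteq> {}"
  proof
    assume "I \<inter> {..<m} = {}"
    hence "A m = {}" unfolding A_def by auto
    thus False using m assms by simp
  qed
  define k where "k = Max (I \<inter> {..<m})"
  have kI: "k \<in> I" "k < m" using Max_in[OF _ nonempty] unfolding k_def by auto
  have I_m: "I \<inter> {..<m} = {..<Suc k}"
  proof
    show "I \<inter> {..<m} \<subseteq> {..<Suc k}" unfolding k_def using nonempty by (auto simp: less_Suc_eq_le)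
    show "{..<Suc k} \<subseteq> I \<inter> {..<m}" using kI down by (auto simp: less_Suc_eq_le)
  qed
  have "cum (Suc k) = measure (measure_pmf p) (A m)"
    unfolding A_def cum_def I_m by (rule cum_eq_measure) (use I_m in auto)
  thus ?thesis using m kI by (intro bexI[of _ k]) auto
qed

definition index :: "real \<Rightarrow> nat" where "index \<delta> = (LEAST k. k \<in> I \<and> \<delta> < cum (Suc k))"

definition quantile :: "real \<Rightarrow> 'a" where "quantile \<delta> = z (index \<delta>)"

lemma index_props:
  assumes "\<delta> \<in> {0..<1}"
  shows "index \<delta> \<in> I" "cum (index \<delta>) \<le> \<delta>" "\<delta> < cum (Suc (index \<delta>))"
proof -
  have ex: "\<exists>k. k \<in> I \<and> \<delta> < cum (Suc k)" using cover assms by auto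
  show *: "index \<delta> \<in> I" "\<delta> < cum (Suc (index \<delta>))"
    unfolding index_def using LeastI_ex[OF ex] by auto
  show "cum (index \<delta>) \<le> \<delta>"
  proof (cases "index \<delta>")
    case 0 thus ?thesis using assms by (simp add: cum_def)
  next
    case (Suc j)
    have "\<not> (j \<in> I \<and> \<delta> < cum (Suc j))"
      using not_less_Least[of j "\<lambda>k. k \<in> I \<and> \<delta> < cum (Suc k)"] Suc unfolding index_def by auto
    thus ?thesis using * Suc down by auto
  qed
qed

lemma index_eq:
  assumes "\<delta> \<in> {0..<1}" "k \<in> I" "cum k \<le> \<delta>" "\<delta> < cum (Suc k)"
  shows "index \<delta> = k"
proof (rule ccontr)
  assume "index \<delta> \<noteq> k"
  hence "Suc k \<le> index \<delta> \<or> Suc (index \<delta>) \<le> k" by auto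
  thus False using cum_mono index_props[OF assms(1)] assms by (meson le_less_trans not_le)
qed

text \<open>On the k-th interval, cfun takes the value log (1 / p(z_k)); this uses that all
  nonincreasing enumerations assign the same probability to delta.\<close>

lemma cfun_eq:
  assumes k: "k \<in> I" "cum k \<le> \<delta>" "\<delta> < cum (Suc k)"
  shows "cfun p \<delta> = ln (1 / pmf p (z k))"
  unfolding cfun_def
proof (rule some_equality)
  fix v assume "\<exists>z' I' k'. desc_enum p z' I' \<and> k' \<in> I' \<and> (\<Sum>i<k'. pmf p (z' i)) \<le> \<delta> \<and>
      \<delta> < (\<Sum>i<Suc k'. pmf p (z' i)) \<and> v = ln (1 / pmf p (z' k'))"
  then obtain z' I' k' where h: "desc_enum p z' I'" "k' \<in> I'" "(\<Sum>i<k'. pmf p (z' i)) \<le> \<delta>"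
      "\<delta> < (\<Sum>i<Suc k'. pmf p (z' i))" "v = ln (1 / pmf p (z' k'))" by blast
  have "pmf p (z k) \<le> pmf p (z' k')" "pmf p (z' k') \<le> pmf p (z k)"
    using desc_enum_value_le[OF desc h(1) k(1) h(2)] desc_enum_value_le[OF h(1) desc h(2) k(1)]
      k h by (auto simp: cum_def)
  thus "v = ln (1 / pmf p (z k))" using h by simp
qed (use desc k in \<open>auto simp: cum_def\<close>)

lemma cfun_quantile: "\<delta> \<in> {0..<1} \<Longrightarrow> cfun p \<delta> = ln (1 / pmf p (quantile \<delta>))"
  unfolding quantile_def using index_props cfun_eq by auto

lemma interval_in_unit:
  "i \<in> I \<Longrightarrow> {cum i..<cum (Suc i)} \<subseteq> {0..<1}"
  using cum_nonneg[of i] cum_le_1[of i] by auto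

lemma quantile_fibre:
  assumes i: "i \<in> I"
  shows "{\<delta>\<in>{0..<1}. quantile \<delta> = z i} = {cum i..<cum (Suc i)}"
proof safe
  fix \<delta> assume d: "\<delta> \<in> {0..<1}" "quantile \<delta> = z i"
  hence "index \<delta> = i"
    using index_props[OF d(1)] inj i unfolding quantile_def by (auto dest: inj_onD)
  thus "\<delta> \<in> {cum i..<cum (Suc i)}" using index_props[OF d(1)] by auto
next
  fix \<delta> assume d: "\<delta> \<in> {cum i..<cum (Suc i)}"
  thus dO: "\<delta> \<in> {0..<1}" using interval_in_unit[OF i] by auto
  show "quantile \<delta> = z i" unfolding quantile_def using index_eq[OF dO i] d by auto
qed

lemma quantile_fibre_outside:
  "x \<notin> set_pmf p \<Longrightarrow> {\<delta>\<in>{0..<1}. quantile \<delta> = x} = {}"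
  using index_props image unfolding quantile_def by auto

lemma vimage_quantile: "quantile -` {x} \<inter> space U = {\<delta>\<in>{0..<1}. quantile \<delta> = x}"
  by (auto simp: space_U)

lemma quantile_measurable: "quantile \<in> measurable U (count_space UNIV)"
  unfolding measurable_count_space_eq2_countable
proof safe
  fix x :: 'a
  show "quantile -` {x} \<inter> space U \<in> sets U"
  proof (cases "x \<in> set_pmf p")
    case True
    then obtain i where i: "i \<in> I" "x = z i" using image by auto
    show ?thesis unfolding vimage_quantile i(2) quantile_fibre[OF i(1)]
      using interval_in_unit[OF i(1)] by (intro sets_U) auto
  next
    case False
    thus ?thesis unfolding vimage_quantile quantile_fibre_outside[OF False] by simp
  qed
qed simp

lemma distr_quantile: "distr U (count_space UNIV) quantile = measure_pmf p"
proof (rule measure_eqI_countable[where A=UNIV])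
  fix x :: 'a
  have "emeasure (distr U (count_space UNIV) quantile) {x} = emeasure U {\<delta>\<in>{0..<1}. quantile \<delta> = x}"
    using quantile_measurable by (subst emeasure_distr) (auto simp: vimage_quantile)
  also have "\<dots> = emeasure (measure_pmf p) {x}"
  proof (cases "x \<in> set_pmf p")
    case True
    then obtain i where i: "i \<in> I" "x = z i" using image by auto
    have "emeasure U {\<delta>\<in>{0..<1}. quantile \<delta> = x} = emeasure lborel {cum i..<cum (Suc i)}"
      unfolding i(2) quantile_fibre[OF i(1)] by (rule emeasure_U[OF interval_in_unit[OF i(1)]])
    thus ?thesis using i by (simp add: cum_Suc emeasure_pmf_single)
  next
    case False
    thus ?thesis
      unfolding quantile_fibre_outside[OF False] by (simp add: emeasure_pmf_single set_pmf_iff)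
  qed
  finally show "emeasure (distr U (count_space UNIV) quantile) {x} = emeasure (measure_pmf p) {x}" .
qed (auto intro: countableI_type)

lemma cfun_measurable: "cfun p \<in> borel_measurable U"
proof -
  have "(\<lambda>\<delta>. ln (1 / pmf p (quantile \<delta>))) \<in> borel_measurable U"
    by (rule measurable_compose[OF quantile_measurable]) simp
  thus ?thesis by (rule measurable_cong[THEN iffD1, rotated]) (simp add: space_U cfun_quantile)
qed

text \<open>The collar of width c: right after the end of the j-th interval, a half-open interval
  of length c * p(z_j).  Since the masses sum to at most 1, its total length is at most c.\<close>

definition collar :: "real \<Rightarrow> real set" where
  "collar c = (\<Union>j\<in>I. {cum (Suc j)..<cum (Suc j) + c * pmf p (z j)})"

lemma collar_measure:
  assumes c: "c \<ge> 0"
  shows "collar c \<inter> {0..<1} \<in> sets U" "measure U (collar c \<inter> {0..<1}) \<le> c"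
proof -
  define H where "H j = (if j \<in> I then {cum (Suc j)..<cum (Suc j) + c * pmf p (z j)} else {})" for j
  define f where "f j = (if j \<in> I then c * pmf p (z j) else 0)" for j
  have collar_H: "collar c = (\<Union>j. H j)" unfolding collar_def H_def by auto
  have H_sets: "H j \<in> sets borel" for j unfolding H_def by auto
  show "collar c \<inter> {0..<1} \<in> sets U"
    unfolding collar_H using H_sets by (intro sets_U) auto
  have f_nonneg: "f j \<ge> 0" for j unfolding f_def using c by auto
  have f_partial: "(\<Sum>j<n. f j) \<le> c" for n
  proof -
    have "(\<Sum>j<n. f j) = c * (\<Sum>j\<in>I \<inter> {..<n}. pmf p (z j))"
      unfolding f_def by (simp add: sum.If_cases Int_commute sum_distrib_left)
    also have "\<dots> = c * measure (measure_pmf p) (z ` (I \<inter> {..<n}))"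
      by (subst cum_eq_measure) auto
    also have "\<dots> \<le> c * 1" using c by (intro mult_left_mono) auto
    finally show ?thesis by simp
  qed
  have f_summable: "summable f" using f_nonneg f_partial by (rule summableI_nonneg_bounded)
  have "emeasure lborel (collar c \<inter> {0..<1}) \<le> emeasure lborel (\<Union>j. H j)"
    unfolding collar_H using H_sets by (intro emeasure_mono) auto
  also have "\<dots> \<le> (\<Sum>j. emeasure lborel (H j))"
    using H_sets by (intro emeasure_subadditive_countably) auto
  also have "\<dots> = (\<Sum>j. ennreal (f j))"
    unfolding H_def f_def using c by (intro suminf_cong) auto
  also have "\<dots> = ennreal (\<Sum>j. f j)" using f_nonneg f_summable by (rule suminf_ennreal2)
  also have "\<dots> \<le> ennreal c" using f_summable f_partial by (intro ennreal_leI suminf_le_const)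
  finally have "measure lborel (collar c \<inter> {0..<1}) \<le> c"
    unfolding measure_def using c by (intro enn2real_leI) auto
  thus "measure U (collar c \<inter> {0..<1}) \<le> c" by (subst measure_U) auto
qed

end


section \<open>The coupling inequality\<close>

lemma vdist_le_disagreement:
  fixes f g :: "'c \<Rightarrow> 'b::countable"
  assumes "prob_space M"
    and fm: "f \<in> measurable M (count_space UNIV)" and gm: "g \<in> measurable M (count_space UNIV)"
    and q: "measure_pmf q = distr M (count_space UNIV) f"
    and r: "measure_pmf r = distr M (count_space UNIV) g"
  shows "vdist q r \<le> 2 * measure M {x\<in>space M. f x \<noteq> g x}"
proof -
  interpret prob_space M by fact
  define D where "D = {x\<in>space M. f x \<noteq> g x}"
  define A where "A b = f -` {b} \<inter> space M" for b
  define B where "B b = g -` {b} \<inter> space M" for b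
  have A_sets: "A b \<in> sets M" for b unfolding A_def using fm by (rule measurable_sets) auto
  have B_sets: "B b \<in> sets M" for b unfolding B_def using gm by (rule measurable_sets) auto
  have D_sets: "D \<in> sets M"
  proof -
    have "D = (\<Union>b. A b - B b)" unfolding D_def A_def B_def by auto
    thus ?thesis using A_sets B_sets by auto
  qed
  have pmf_q: "pmf q b = measure M (A b)" for b
    using fm by (simp add: measure_pmf_single[symmetric] q measure_distr A_def)
  have pmf_r: "pmf r b = measure M (B b)" for b
    using gm by (simp add: measure_pmf_single[symmetric] r measure_distr B_def)
  text \<open>Pointwise: the two fibres of b differ only inside the disagreement set.\<close>
  have fibre_le: "measure M X \<le> measure M Y + measure M (X \<inter> D)"
    if "X \<in> sets M" "Y \<in> sets M" "X - Y \<subseteq> D" for X Y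
  proof -
    have "measure M X \<le> measure M (Y \<union> (X \<inter> D))"
      using that D_sets by (intro finite_measure_mono) auto
    also have "\<dots> \<le> measure M Y + measure M (X \<inter> D)"
      using that D_sets by (intro measure_Un_le) auto
    finally show ?thesis .
  qed
  have pointwise: "\<bar>pmf q b - pmf r b\<bar> \<le> measure M (A b \<inter> D) + measure M (B b \<inter> D)" for b
  proof -
    have "measure M (A b) \<le> measure M (B b) + measure M (A b \<inter> D)"
      by (rule fibre_le[OF A_sets B_sets]) (auto simp: A_def B_def D_def)
    moreover have "measure M (B b) \<le> measure M (A b) + measure M (B b \<inter> D)"
      by (rule fibre_le[OF B_sets A_sets]) (auto simp: A_def B_def D_def)
    moreover have "measure M (A b \<inter> D) \<ge> 0" "measure M (B b \<inter> D) \<ge> 0" by auto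
    ultimately show ?thesis unfolding pmf_q pmf_r abs_le_iff by linarith
  qed
  text \<open>Summing over finitely many b, the disjoint pieces fill at most D, twice.\<close>
  have finite_sums: "(\<Sum>b\<in>F. \<bar>pmf q b - pmf r b\<bar>) \<le> 2 * measure M D" if "finite F" for F
  proof -
    have disjoint: "disjoint_family_on (\<lambda>b. A b \<inter> D) F" "disjoint_family_on (\<lambda>b. B b \<inter> D) F"
      unfolding disjoint_family_on_def A_def B_def by auto
    have "(\<Sum>b\<in>F. \<bar>pmf q b - pmf r b\<bar>) \<le>
        (\<Sum>b\<in>F. measure M (A b \<inter> D)) + (\<Sum>b\<in>F. measure M (B b \<inter> D))"
      using pointwise by (simp add: sum.distrib[symmetric] sum_mono)
    also have "\<dots> = measure M (\<Union>b\<in>F. A b \<inter> D) + measure M (\<Union>b\<in>F. B b \<inter> D)"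
      using that disjoint A_sets B_sets D_sets
      by (intro arg_cong2[where f="(+)"] finite_measure_finite_Union[symmetric]) auto
    also have "\<dots> \<le> measure M D + measure M D"
      using D_sets by (intro add_mono finite_measure_mono) auto
    finally show ?thesis by simp
  qed
  have "(\<lambda>b. \<bar>pmf q b - pmf r b\<bar>) summable_on UNIV"
    using finite_sums by (intro nonneg_bdd_above_summable_on) (auto simp: bdd_above_def)
  thus ?thesis unfolding vdist_def D_def[symmetric] using finite_sums by (rule infsum_le_finite_sums)
qed

lemma vdist_nonneg: "vdist p q \<ge> 0"
  unfolding vdist_def by (intro infsum_nonneg) auto


section \<open>The transport map and the one-shot estimate\<close>

lemma ln_gap_le:
  fixes a b \<gamma> :: real
  assumes "0 < a" "0 < b" "\<gamma> \<le> ln (1 / a) - ln (1 / b)"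
  shows "a \<le> exp (-\<gamma>) * b"
proof -
  have "ln a \<le> ln b - \<gamma>" using assms by (simp add: ln_div)
  hence "exp (ln a) \<le> exp (ln b - \<gamma>)" by simp
  thus ?thesis using assms by (simp add: exp_diff exp_minus field_simps)
qed

locale enum_pair =
  P: desc_enumeration p z I + R: desc_enumeration q w J
  for p :: "'a::countable pmf" and z I and q :: "'b::countable pmf" and w J
begin

definition transport :: "'a \<Rightarrow> 'b" where
  "transport x = R.quantile (P.cum (inv_into I z x))"

lemma transport_quantile:
  "\<delta> \<in> {0..<1} \<Longrightarrow> transport (P.quantile \<delta>) = R.quantile (P.cum (P.index \<delta>))"
  unfolding transport_def P.quantile_def using P.index_props P.inj by simp

text \<open>Indeed the p-interval
  i containing delta starts in the q-interval j, delta is in a later q-interval k, and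
  p(z_i) <= exp (-gamma) q(w_k) <= exp (-gamma) q(w_j).\<close>

lemma disagreement_in_collar:
  assumes dO: "\<delta> \<in> {0..<1}"
    and differ: "R.quantile \<delta> \<noteq> transport (P.quantile \<delta>)"
    and gap: "\<gamma> \<le> cfun p \<delta> - cfun q \<delta>"
  shows "\<delta> \<in> R.collar (exp (-\<gamma>))"
proof -
  define i where "i = P.index \<delta>"
  have i: "i \<in> I" "P.cum i \<le> \<delta>" "\<delta> < P.cum (Suc i)"
    using P.index_props[OF dO] unfolding i_def by auto
  have iO: "P.cum i \<in> {0..<1}" using i dO P.cum_nonneg[of i] by auto
  define j where "j = R.index (P.cum i)"
  have j: "j \<in> J" "R.cum j \<le> P.cum i" "P.cum i < R.cum (Suc j)"
    using R.index_props[OF iO] unfolding j_def by auto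
  define k where "k = R.index \<delta>"
  have k: "k \<in> J" "R.cum k \<le> \<delta>" "\<delta> < R.cum (Suc k)"
    using R.index_props[OF dO] unfolding k_def by auto
  have "k \<noteq> j"
    using differ transport_quantile[OF dO] unfolding R.quantile_def i_def j_def k_def by auto
  moreover have "\<not> k < j"
    using R.cum_mono[of "Suc k" j] i j k by auto
  ultimately have jk: "Suc j \<le> k" by simp
  hence after: "R.cum (Suc j) \<le> \<delta>" using R.cum_mono[of "Suc j" k] k by simp
  have "pmf p (z i) \<le> exp (-\<gamma>) * pmf q (w k)"
    using ln_gap_le[OF P.pos[OF i(1)] R.pos[OF k(1)]] gap P.cfun_eq[OF i] R.cfun_eq[OF k] by simp
  also have "\<dots> \<le> exp (-\<gamma>) * pmf q (w j)"
    using R.mono[OF j(1) k(1)] jk by (intro mult_left_mono) auto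
  finally have "\<delta> < R.cum (Suc j) + exp (-\<gamma>) * pmf q (w j)"
    using i(3) j(3) P.cum_Suc[of i] by simp
  thus ?thesis unfolding R.collar_def using j(1) after by auto
qed

lemma vdist_transport_le:
  "vdist q (map_pmf transport p) \<le>
     2 * (measure lborel {\<delta>\<in>{0..<1}. cfun p \<delta> - cfun q \<delta> < \<gamma>} + exp (-\<gamma>))"
proof -
  interpret prob_space U by (rule prob_space_U)
  define g where "g = transport \<circ> P.quantile"
  define Bad where "Bad = {\<delta>\<in>{0..<1}. cfun p \<delta> - cfun q \<delta> < \<gamma>}"
  define D where "D = {\<delta>\<in>space U. R.quantile \<delta> \<noteq> g \<delta>}"
  define C where "C = R.collar (exp (-\<gamma>)) \<inter> {0..<1}"
  have g_meas: "g \<in> measurable U (count_space UNIV)"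
    unfolding g_def by (rule measurable_comp[OF P.quantile_measurable]) simp
  have "measure_pmf (map_pmf transport p) = distr U (count_space UNIV) g"
    unfolding map_pmf_rep_eq P.distr_quantile[symmetric] g_def
    by (subst distr_distr) (auto intro: P.quantile_measurable)
  hence coupling: "vdist q (map_pmf transport p) \<le> 2 * measure U D"
    unfolding D_def using R.distr_quantile
    by (intro vdist_le_disagreement[OF prob_space_U R.quantile_measurable g_meas]) auto
  have Bad_sets: "Bad \<in> sets U"
  proof -
    have "Bad = {\<delta>\<in>space U. cfun p \<delta> - cfun q \<delta> < \<gamma>}" unfolding Bad_def space_U ..
    moreover have "(\<lambda>\<delta>. cfun p \<delta> - cfun q \<delta>) \<in> borel_measurable U"
      using P.cfun_measurable R.cfun_measurable by (rule borel_measurable_diff)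
    ultimately show ?thesis by (simp add: borel_measurable_less)
  qed
  have "D \<subseteq> Bad \<union> C"
  proof
    fix \<delta> assume "\<delta> \<in> D"
    hence "\<delta> \<in> {0..<1}" "R.quantile \<delta> \<noteq> transport (P.quantile \<delta>)"
      unfolding D_def g_def space_U by auto
    thus "\<delta> \<in> Bad \<union> C"
      using disagreement_in_collar[of \<delta> \<gamma>] unfolding Bad_def C_def by force
  qed
  have C_sets: "C \<in> sets U" unfolding C_def by (rule R.collar_measure(1)) simp
  have "measure U D \<le> measure U (Bad \<union> C)"
    using \<open>D \<subseteq> Bad \<union> C\<close> Bad_sets C_sets by (intro finite_measure_mono) auto
  also have "\<dots> \<le> measure U Bad + measure U C"
    using Bad_sets C_sets by (rule measure_Un_le)
  also have "\<dots> \<le> measure lborel Bad + exp (-\<gamma>)"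
  proof -
    have "measure U Bad = measure lborel Bad" by (rule measure_U) (auto simp: Bad_def)
    thus ?thesis using R.collar_measure(2)[of "exp (-\<gamma>)"] unfolding C_def by simp
  qed
  finally show ?thesis using coupling unfolding Bad_def by simp
qed

end

lemma exists_transport:
  fixes p :: "'a::countable pmf" and q :: "'b::countable pmf"
  shows "\<exists>\<phi>. \<forall>\<gamma>. vdist q (map_pmf \<phi> p) \<le>
           2 * (measure lborel {\<delta>\<in>{0..<1}. cfun p \<delta> - cfun q \<delta> < \<gamma>} + exp (-\<gamma>))"
proof -
  obtain z I where "desc_enum p z I" using exists_desc_enum by blast
  moreover obtain w J where "desc_enum q w J" using exists_desc_enum by blast
  ultimately interpret enum_pair p z I q w J by (simp add: enum_pair_def desc_enumeration_def)
  show ?thesis using vdist_transport_le by blast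
qed


lemma tendsto_zero_by_gamma_bounds:
  fixes a :: "nat \<Rightarrow> real" and b :: "real \<Rightarrow> nat \<Rightarrow> real"
  assumes nonneg: "\<And>n. 0 \<le> a n"
    and bound: "\<And>n \<gamma>. a n \<le> 2 * (b \<gamma> n + exp (-\<gamma>))"
    and lim: "\<And>\<gamma>. b \<gamma> \<longlonglongrightarrow> 0"
  shows "a \<longlonglongrightarrow> 0"
proof (rule LIMSEQ_I)
  fix r :: real assume r: "r > 0"
  define \<gamma> where "\<gamma> = - ln (r / 4)"
  have exp_\<gamma>: "exp (-\<gamma>) = r / 4" unfolding \<gamma>_def using r by simp
  obtain N where N: "\<And>n. n \<ge> N \<Longrightarrow> b \<gamma> n < r / 4"
    using order_tendstoD(2)[OF lim, of "r / 4" \<gamma>] r by (auto simp: eventually_sequentially)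
  have "norm (a n - 0) < r" if "n \<ge> N" for n
  proof -
    have "a n \<le> 2 * (b \<gamma> n + exp (-\<gamma>))" by (rule bound)
    also have "\<dots> < 2 * (r / 4 + r / 4)" using N[OF that] exp_\<gamma> by simp
    finally show ?thesis using nonneg[of n] by simp
  qed
  thus "\<exists>N. \<forall>n\<ge>N. norm (a n - 0) < r" by blast
qed

theorem theorem1:
  fixes X :: "nat \<Rightarrow> 'a::countable pmf" and Y :: "nat \<Rightarrow> 'b::countable pmf"
  assumes "\<forall>\<gamma>::real. (\<lambda>n. measure lborel
             {\<delta> \<in> {0..<1}. cfun (X n) \<delta> - cfun (Y n) \<delta> < \<gamma>}) \<longlonglongrightarrow> 0"
  shows "approximating_source X Y"
proof -
  have "\<forall>n. \<exists>\<phi>. \<forall>\<gamma>. vdist (Y n) (map_pmf \<phi> (X n)) \<le>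
      2 * (measure lborel {\<delta>\<in>{0..<1}. cfun (X n) \<delta> - cfun (Y n) \<delta> < \<gamma>} + exp (-\<gamma>))"
    using exists_transport by blast
  then obtain \<phi> where \<phi>: "\<And>n \<gamma>. vdist (Y n) (map_pmf (\<phi> n) (X n)) \<le>
      2 * (measure lborel {\<delta>\<in>{0..<1}. cfun (X n) \<delta> - cfun (Y n) \<delta> < \<gamma>} + exp (-\<gamma>))"
    by metis
  have "(\<lambda>n. vdist (Y n) (map_pmf (\<phi> n) (X n))) \<longlonglongrightarrow> 0"
    using assms by (intro tendsto_zero_by_gamma_bounds[OF vdist_nonneg \<phi>]) blast
  thus ?thesis unfolding approximating_source_def by blast
qed

end
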